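(* Let $(\mathcal{V},g)$ be a real scalar product space of dimension $n>2m$, let $J_1,\dots,J_m$ be skew-adjoint endomorphisms of $\mathcal{V}$ with $J_iJ_j+J_jJ_i=2\delta_{ij}\,\mathrm{id}$ for $1\le i,j\le m$, and let $\mu_0\in\mathbb{R}$ and $\mu_1,\dots,\mu_m\in\mathbb{R}\setminus\{0\}$. Suppose there exist $\theta_0,\dots,\theta_m\in\mathbb{R}$, not all zero, and a nonzero $X\in\mathcal{V}$ such that $\theta_0X+\theta_1J_1X+\dots+\theta_mJ_mX=0$ and $$\theta_0^2=\sum_{i=1}^m\theta_i^2=-\mu_0\sum_{i=1}^m\frac{\theta_i^2}{3\mu_i}.$$ Then the (anti-Clifford) algebraic curvature tensor $R=\mu_0R^0+\sum_{i=1}^m\mu_iR^{J_i}$ is not totally Jacobi-dual.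
   Context: A scalar product space is a finite-dimensional real vector space with a nondegenerate symmetric bilinear form $g$; $\varepsilon_X=g(X,X)$. $R^0(X,Y,Z,W)=g(Y,Z)g(X,W)-g(X,Z)g(Y,W)$; for skew-adjoint $J$, $R^J(X,Y,Z,W)=g(JX,Z)g(JY,W)-g(JY,Z)g(JX,W)+2g(JX,Y)g(JZ,W)$. The Jacobi operator is $\mathcal{J}_X(Y)=\sum_{i}\varepsilon_{E_i}R(Y,X,X,E_i)E_i$ for an orthonormal basis $(E_i)$. An eigenvector of $\mathcal{J}_X$ is a nonzero $Y$ with $\mathcal{J}_X(Y)=\lambda Y$, $\lambda\in\mathbb{R}$. $R$ is totally Jacobi-dual if for all $X,Y\in\mathcal{V}$ with $X\neq0$: whenever $Y$ is an eigenvector of $\mathcal{J}_X$, then $X$ is an eigenvector of $\mathcal{J}_Y$. *)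

theory Defs
  imports "HOL-Analysis.Analysis"
begin

text \<open>Scalar product space: a finite-dimensional real vector space (type class
  euclidean_space, used only as a carrier of a finite-dimensional real vector space;
  its built-in inner product is NOT used) with a nondegenerate symmetric bilinear form g.\<close>

definition scalar_product :: "('v::euclidean_space \<Rightarrow> 'v \<Rightarrow> real) \<Rightarrow> bool" where
  "scalar_product g \<longleftrightarrow> bilinear g \<and> (\<forall>x y. g x y = g y x) \<and>
     (\<forall>x. (\<forall>y. g x y = 0) \<longrightarrow> x = 0)"

definition skew_adjoint :: "('v::euclidean_space \<Rightarrow> 'v \<Rightarrow> real) \<Rightarrow> ('v \<Rightarrow> 'v) \<Rightarrow> bool" where
  "skew_adjoint g J \<longleftrightarrow> linear J \<and> (\<forall>x y. g (J x) y = - g x (J y))"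

definition R0 :: "('v \<Rightarrow> 'v \<Rightarrow> real) \<Rightarrow> 'v \<Rightarrow> 'v \<Rightarrow> 'v \<Rightarrow> 'v \<Rightarrow> real" where
  "R0 g X Y Z W = g Y Z * g X W - g X Z * g Y W"

definition RJ :: "('v \<Rightarrow> 'v \<Rightarrow> real) \<Rightarrow> ('v \<Rightarrow> 'v) \<Rightarrow> 'v \<Rightarrow> 'v \<Rightarrow> 'v \<Rightarrow> 'v \<Rightarrow> real" where
  "RJ g J X Y Z W = g (J X) Z * g (J Y) W - g (J Y) Z * g (J X) W + 2 * g (J X) Y * g (J Z) W"

definition g_orthonormal_basis :: "('v::euclidean_space \<Rightarrow> 'v \<Rightarrow> real) \<Rightarrow> 'v set \<Rightarrow> bool" where
  "g_orthonormal_basis g B \<longleftrightarrow> finite B \<and> independent B \<and> span B = UNIV \<and>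
     (\<forall>e\<in>B. g e e = 1 \<or> g e e = -1) \<and> (\<forall>e\<in>B. \<forall>f\<in>B. e \<noteq> f \<longrightarrow> g e f = 0)"

definition jacobi_op :: "('v::euclidean_space \<Rightarrow> 'v \<Rightarrow> real) \<Rightarrow> ('v \<Rightarrow> 'v \<Rightarrow> 'v \<Rightarrow> 'v \<Rightarrow> real)
    \<Rightarrow> 'v \<Rightarrow> 'v \<Rightarrow> 'v" where
  "jacobi_op g R X Y = (let B = (SOME B. g_orthonormal_basis g B) in
     (\<Sum>E\<in>B. (g E E * R Y X X E) *\<^sub>R E))"

definition is_eigenvector :: "('v::real_vector \<Rightarrow> 'v) \<Rightarrow> 'v \<Rightarrow> bool" where
  "is_eigenvector f Y \<longleftrightarrow> Y \<noteq> 0 \<and> (\<exists>c::real. f Y = c *\<^sub>R Y)"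

definition totally_jacobi_dual :: "('v::euclidean_space \<Rightarrow> 'v \<Rightarrow> real) \<Rightarrow> ('v \<Rightarrow> 'v \<Rightarrow> 'v \<Rightarrow> 'v \<Rightarrow> real) \<Rightarrow> bool" where
  "totally_jacobi_dual g R \<longleftrightarrow> (\<forall>X Y. X \<noteq> 0 \<longrightarrow> is_eigenvector (jacobi_op g R X) Y
       \<longrightarrow> is_eigenvector (jacobi_op g R Y) X)"

end

theory Submission
  imports Defs
begin

(* Let A = theta_1 J_1 + ... + theta_m J_m. Then A is skew-adjoint, A^2 = theta_0^2 id and
   A X = -theta_0 X, so X is null. The (-theta_0)-eigenspace of A is totally isotropic, hence has
   dimension at most n/2; as n > 2m, a dimension count gives z orthogonal to X such that
   w = theta_0 z + A z lies outside span {J_i X}. Pick Y with g(Y, J_i X) = mu_0 theta_i / (3 mu_i theta_0)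
   and g(Y, w) = 1; the hypothesis on theta and mu then forces g(Y, X) = 1. With these pairings
   the Jacobi operator Jac_X kills Y, so Y is an eigenvector of Jac_X, whereas
   g(Jac_Y X, z) = -mu_0 / theta_0 is nonzero although g(X, z) = 0, so X is not an eigenvector
   of Jac_Y. *)

locale scalar_product_space =
  fixes g :: "'v::euclidean_space \<Rightarrow> 'v \<Rightarrow> real"
  assumes scalar_product: "scalar_product g"
begin

lemma bilinear: "bilinear g"
  using scalar_product unfolding scalar_product_def by blast

lemma g_sym: "g x y = g y x"
  using scalar_product unfolding scalar_product_def by blast

lemma g_nondegenerate: "(\<And>y. g x y = 0) \<Longrightarrow> x = 0"
  using scalar_product unfolding scalar_product_def by blast

lemma g_add_left [simp]: "g (x + y) z = g x z + g y z"
  by (rule bilinear_ladd[OF bilinear])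
lemma g_add_right [simp]: "g z (x + y) = g z x + g z y"
  by (rule bilinear_radd[OF bilinear])
lemma g_diff_left [simp]: "g (x - y) z = g x z - g y z"
  by (rule bilinear_lsub[OF bilinear])
lemma g_diff_right [simp]: "g z (x - y) = g z x - g z y"
  by (rule bilinear_rsub[OF bilinear])
lemma g_minus_left [simp]: "g (- x) z = - g x z"
  by (rule bilinear_lneg[OF bilinear])
lemma g_minus_right [simp]: "g z (- x) = - g z x"
  by (rule bilinear_rneg[OF bilinear])
lemma g_scaleR_left [simp]: "g (c *\<^sub>R x) y = c * g x y"
  using bilinear_lmul[OF bilinear] by simp
lemma g_scaleR_right [simp]: "g x (c *\<^sub>R y) = c * g x y"
  using bilinear_rmul[OF bilinear] by simp
lemma g_zero_left [simp]: "g 0 z = 0"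
  by (rule bilinear_lzero[OF bilinear])
lemma g_zero_right [simp]: "g z 0 = 0"
  by (rule bilinear_rzero[OF bilinear])
lemma g_sum_left [simp]: "g (sum f S) z = (\<Sum>i\<in>S. g (f i) z)"
  by (induction S rule: infinite_finite_induct) auto
lemma g_sum_right [simp]: "g z (sum f S) = (\<Sum>i\<in>S. g z (f i))"
  by (induction S rule: infinite_finite_induct) auto

definition nondegenerate_on :: "'v set \<Rightarrow> bool" where
  "nondegenerate_on S \<longleftrightarrow> (\<forall>x\<in>S. (\<forall>y\<in>S. g x y = 0) \<longrightarrow> x = 0)"

definition orthonormal :: "'v set \<Rightarrow> bool" where
  "orthonormal B \<longleftrightarrow> (\<forall>e\<in>B. g e e = 1 \<or> g e e = -1) \<and> (\<forall>e\<in>B. \<forall>f\<in>B. e \<noteq> f \<longrightarrow> g e f = 0)"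

lemma exists_unit_vector:
  assumes S: "subspace S" and nd: "nondegenerate_on S" and "S \<noteq> {0}"
  shows "\<exists>e\<in>S. g e e = 1 \<or> g e e = -1"
proof -
  obtain x where x: "x \<in> S" "x \<noteq> 0" using \<open>S \<noteq> {0}\<close> subspace_0[OF S] by blast
  then obtain y where y: "y \<in> S" "g x y \<noteq> 0" using nd unfolding nondegenerate_on_def by blast
  \<comment> \<open>polarization: if x and y are both null, then x + y is not\<close>
  have "\<exists>v\<in>S. g v v \<noteq> 0"
  proof (cases "g x x = 0 \<and> g y y = 0")
    case True
    then have "g (x + y) (x + y) = 2 * g x y" by (simp add: g_sym[of y x])
    then show ?thesis using x y subspace_add[OF S] by (metis mult_eq_0_iff zero_neq_numeral)
  qed (use x y in blast)
  then obtain v where v: "v \<in> S" "g v v \<noteq> 0" by blast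
  have "g ((1 / sqrt \<bar>g v v\<bar>) *\<^sub>R v) ((1 / sqrt \<bar>g v v\<bar>) *\<^sub>R v) = sgn (g v v)"
    using v(2) by (simp add: sgn_if)
  then show ?thesis using v subspace_scale[OF S] by (metis sgn_if)
qed

lemma projection_mem_orthogonal_slice:
  assumes "subspace S" "e \<in> S" "g e e \<noteq> 0" "z \<in> S"
  shows "z - (g e z / g e e) *\<^sub>R e \<in> {z \<in> S. g e z = 0}"
  using assms by (simp add: subspace_diff subspace_scale)

lemma nondegenerate_on_orthogonal_slice:
  assumes S: "subspace S" and nd: "nondegenerate_on S" and e: "e \<in> S" "g e e \<noteq> 0"
  shows "nondegenerate_on {z \<in> S. g e z = 0}"
  unfolding nondegenerate_on_def
proof (intro ballI impI)
  fix x assume x: "x \<in> {z \<in> S. g e z = 0}" and h: "\<forall>y\<in>{z \<in> S. g e z = 0}. g x y = 0"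
  have "g x z = 0" if "z \<in> S" for z
  proof -
    have "g x (z - (g e z / g e e) *\<^sub>R e) = 0"
      using h projection_mem_orthogonal_slice[OF S e that] by blast
    then show ?thesis using x by (simp add: g_sym[of x e])
  qed
  then show "x = 0" using nd x unfolding nondegenerate_on_def by blast
qed

lemma span_insert_orthogonal_slice:
  assumes S: "subspace S" and e: "e \<in> S" "g e e \<noteq> 0"
  shows "span (insert e {z \<in> S. g e z = 0}) = S"
proof
  show "span (insert e {z \<in> S. g e z = 0}) \<subseteq> S"
    using S e by (intro span_minimal) auto
  show "S \<subseteq> span (insert e {z \<in> S. g e z = 0})"
  proof
    fix z assume "z \<in> S"
    then have "z - (g e z / g e e) *\<^sub>R e \<in> span (insert e {z \<in> S. g e z = 0})"
      using projection_mem_orthogonal_slice[OF S e] by (simp add: span_base)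
    moreover have "(g e z / g e e) *\<^sub>R e \<in> span (insert e {z \<in> S. g e z = 0})"
      by (simp add: span_base span_scale)
    ultimately show "z \<in> span (insert e {z \<in> S. g e z = 0})"
      using span_add by fastforce
  qed
qed

lemma orthonormal_basis_of_subspace_exists:
  assumes "subspace S" and "nondegenerate_on S"
  shows "\<exists>B\<subseteq>S. finite B \<and> independent B \<and> span B = S \<and> orthonormal B"
  using assms
proof (induction "dim S" arbitrary: S rule: less_induct)
  case less
  show ?case
  proof (cases "S = {0}")
    case True
    then show ?thesis by (intro exI[of _ "{}"]) (auto simp: orthonormal_def independent_empty)
  next
    case False
    then obtain e where e: "e \<in> S" "g e e = 1 \<or> g e e = -1"
      using exists_unit_vector less.prems by blast
    then have ee: "g e e \<noteq> 0" by auto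
    define S' where "S' = {z \<in> S. g e z = 0}"
    have S': "subspace S'"
      unfolding S'_def using less.prems(1) by (auto simp: subspace_def)
    have "S' \<subset> S" using e ee unfolding S'_def by auto
    then have "dim S' < dim S"
      using dim_psubset S' less.prems(1) by (metis span_eq_iff)
    then obtain B' where B': "B' \<subseteq> S'" "finite B'" "independent B'" "span B' = S'" "orthonormal B'"
      using less.hyps S' nondegenerate_on_orthogonal_slice[OF less.prems e(1) ee]
      unfolding S'_def by blast
    have "e \<notin> span B'" using B'(4) ee unfolding S'_def by auto
    then have "independent (insert e B')" using B'(3) independent_insertI by blast
    moreover have "span (insert e B') = S"
    proof -
      have "span (insert e B') = span (insert e S')"
        using S' by (simp add: span_insert B'(4) span_eq_iff[THEN iffD2])
      then show ?thesis
        using span_insert_orthogonal_slice[OF less.prems(1) e(1) ee] unfolding S'_def by simp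
    qed
    moreover have "orthonormal (insert e B')"
    proof -
      have "g e f = 0" "g f e = 0" if "f \<in> B'" for f
        using that B'(1) g_sym[of f e] unfolding S'_def by auto
      then show ?thesis using B'(5) e(2) unfolding orthonormal_def by blast
    qed
    ultimately show ?thesis
      using B'(1,2) e(1) unfolding S'_def by (intro exI[of _ "insert e B'"]) auto
  qed
qed

lemma orthonormal_basis_exists: "\<exists>B. g_orthonormal_basis g B"
  using orthonormal_basis_of_subspace_exists[OF subspace_UNIV] g_nondegenerate
  unfolding g_orthonormal_basis_def nondegenerate_on_def orthonormal_def by blast

lemma orthonormal_expansion:
  assumes B: "g_orthonormal_basis g B"
  shows "v = (\<Sum>E\<in>B. (g E E * g v E) *\<^sub>R E)"
proof -
  define w where "w = v - (\<Sum>E\<in>B. (g E E * g v E) *\<^sub>R E)"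
  have fin: "finite B" using B unfolding g_orthonormal_basis_def by auto
  have "g w F = 0" if F: "F \<in> B" for F
  proof -
    have "(\<Sum>E\<in>B. g E E * g v E * g E F) = (\<Sum>E\<in>{F}. g E E * g v E * g E F)"
      by (rule sum.mono_neutral_right) (use fin F B in \<open>auto simp: g_orthonormal_basis_def\<close>)
    also have "\<dots> = g v F"
      using B F unfolding g_orthonormal_basis_def by auto
    finally show ?thesis unfolding w_def by simp
  qed
  then have "span B \<subseteq> {y. g w y = 0}"
    by (intro span_minimal) (auto simp: subspace_def)
  then have "w = 0"
    using B g_nondegenerate unfolding g_orthonormal_basis_def by blast
  then show ?thesis unfolding w_def by simp
qed

lemma jacobi_op_eqI:
  assumes "\<And>E. R Y X X E = g V E"
  shows "jacobi_op g R X Y = V"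
proof -
  have "g_orthonormal_basis g (SOME B. g_orthonormal_basis g B)"
    using orthonormal_basis_exists by (rule someI_ex)
  from orthonormal_expansion[OF this, of V] show ?thesis
    unfolding jacobi_op_def Let_def assms by simp
qed

lemma representation_of_functional:
  assumes f: "linear f"
  shows "\<exists>Y. \<forall>v. g Y v = f v"
proof -
  obtain B where B: "g_orthonormal_basis g B" using orthonormal_basis_exists by blast
  define Y where "Y = (\<Sum>E\<in>B. (g E E * f E) *\<^sub>R E)"
  have "g Y v = f v" for v
  proof -
    have "f v = (\<Sum>E\<in>B. (g E E * g v E) * f E)"
      using arg_cong[OF orthonormal_expansion[OF B, of v], of f]
      by (simp add: linear_sum[OF f] linear_scale[OF f])
    then show ?thesis unfolding Y_def by (simp add: g_sym[of v] mult_ac)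
  qed
  then show ?thesis by blast
qed

lemma exists_vector_with_pairings:
  assumes "independent B"
  shows "\<exists>Y. \<forall>b\<in>B. g Y b = h b"
proof -
  obtain f where "linear f" "\<forall>b\<in>B. f b = h b"
    using linear_independent_extend[OF assms] by blast
  then show ?thesis using representation_of_functional by metis
qed

text \<open>The flat map turns g-orthogonality into orthogonality for the Euclidean inner product
  of the carrier type, for which the library knows the dimension of orthogonal complements.\<close>

definition flat :: "'v \<Rightarrow> 'v" where
  "flat y = (\<Sum>b\<in>Basis. g b y *\<^sub>R b)"

lemma inner_flat: "x \<bullet> flat y = g x y"
proof -
  have "x \<bullet> flat y = g (\<Sum>b\<in>Basis. (x \<bullet> b) *\<^sub>R b) y"
    unfolding flat_def by (simp add: inner_sum_right mult.commute)
  then show ?thesis by (simp add: euclidean_representation)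
qed

lemma linear_flat: "linear flat"
  unfolding flat_def
  by (rule linearI) (simp_all add: scaleR_add_left sum.distrib scaleR_sum_right)

lemma inj_flat: "inj flat"
proof (rule injI)
  fix x y assume "flat x = flat y"
  then have "g z (x - y) = 0" for z using inner_flat[of z x] inner_flat[of z y] by simp
  then show "x = y" using g_nondegenerate g_sym by (metis eq_iff_diff_eq_0)
qed

lemma dim_orthogonal_complement:
  assumes "subspace S"
  shows "dim {y. \<forall>x\<in>S. g x y = 0} + dim S = DIM('v)"
proof -
  have "{y. \<forall>x\<in>S. g x y = 0} = {y \<in> UNIV. \<forall>x \<in> flat ` S. orthogonal x y}"
    by (auto simp: orthogonal_def inner_flat inner_commute[of "flat _"] g_sym)
  moreover have "dim (flat ` S) = dim S"
    using inj_flat by (intro dim_image_eq[OF linear_flat]) (auto simp: inj_on_def inj_def)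
  moreover have "dim {y \<in> UNIV. \<forall>x \<in> flat ` S. orthogonal x y} + dim (flat ` S) = DIM('v)"
    using dim_subspace_orthogonal_to_vectors[of "flat ` S" UNIV]
      linear_subspace_image[OF linear_flat assms] by simp
  ultimately show ?thesis by simp
qed

lemma dim_orthogonal_vector:
  assumes "X \<noteq> 0"
  shows "dim {z. g X z = 0} + 1 = DIM('v)"
proof -
  have "{z. g X z = 0} = {y. \<forall>x\<in>span {X}. g x y = 0}"
    by (auto simp: span_singleton)
  then show ?thesis
    using dim_orthogonal_complement[OF subspace_span, of "{X}"] assms by simp
qed

lemma dim_isotropic_subspace:
  assumes "subspace I" and "\<forall>x\<in>I. \<forall>y\<in>I. g x y = 0"
  shows "2 * dim I \<le> DIM('v)"
proof -
  have "dim I \<le> dim {y. \<forall>x\<in>I. g x y = 0}"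
    using assms(2) by (intro dim_subset) auto
  then show ?thesis using dim_orthogonal_complement[OF assms(1)] by linarith
qed

lemma subspace_eigenspace:
  assumes "linear A"
  shows "subspace {z. A z = c *\<^sub>R z}"
  using assms by (auto simp: subspace_def linear_add linear_scale linear_0 algebra_simps)

lemma skew_adjoint_eigenvectors_orthogonal:
  assumes "skew_adjoint g A" "t \<noteq> 0" "A x = t *\<^sub>R x" "A y = t *\<^sub>R y"
  shows "g x y = 0"
proof -
  have "t * g x y = - (t * g x y)"
    using assms(1,3,4) unfolding skew_adjoint_def by (metis g_scaleR_left g_scaleR_right)
  then show ?thesis using assms(2) by simp
qed

end

locale clifford_family = scalar_product_space g
  for g :: "'v::euclidean_space \<Rightarrow> 'v \<Rightarrow> real" +
  fixes m :: nat and J :: "nat \<Rightarrow> 'v \<Rightarrow> 'v"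
  assumes skew_adjoint_J: "\<forall>i\<in>{1..m}. skew_adjoint g (J i)"
    and J_anticommute:
      "\<forall>i\<in>{1..m}. \<forall>j\<in>{1..m}. \<forall>x. J i (J j x) + J j (J i x) = (if i = j then 2 else 0) *\<^sub>R x"
begin

lemma linear_J: "i \<in> {1..m} \<Longrightarrow> linear (J i)"
  using skew_adjoint_J unfolding skew_adjoint_def by blast

lemma g_J_left: "i \<in> {1..m} \<Longrightarrow> g (J i x) y = - g x (J i y)"
  using skew_adjoint_J unfolding skew_adjoint_def by blast

lemma g_J_self: "i \<in> {1..m} \<Longrightarrow> g (J i x) x = 0"
  using g_J_left[of i x x] g_sym[of x "J i x"] by simp

lemma J_J_self:
  assumes "i \<in> {1..m}"
  shows "J i (J i x) = x"
proof -
  have "J i (J i x) + J i (J i x) = 2 *\<^sub>R x" using J_anticommute assms by auto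
  then show ?thesis by (simp flip: scaleR_2)
qed

definition Jcomb :: "(nat \<Rightarrow> real) \<Rightarrow> 'v \<Rightarrow> 'v" where
  "Jcomb a x = (\<Sum>i=1..m. a i *\<^sub>R J i x)"

lemma linear_Jcomb: "linear (Jcomb a)"
proof (rule linearI)
  show "Jcomb a (x + y) = Jcomb a x + Jcomb a y" for x y
    unfolding Jcomb_def using linear_J by (simp add: linear_add scaleR_add_right sum.distrib)
  show "Jcomb a (c *\<^sub>R x) = c *\<^sub>R Jcomb a x" for c x
    unfolding Jcomb_def scaleR_sum_right by (intro sum.cong) (auto simp: linear_J linear_scale)
qed

lemma skew_adjoint_Jcomb: "skew_adjoint g (Jcomb a)"
proof -
  have "g (Jcomb a x) y = - g x (Jcomb a y)" for x y
    by (simp add: Jcomb_def g_J_left sum_negf[symmetric])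
  then show ?thesis using linear_Jcomb unfolding skew_adjoint_def by blast
qed

lemma Jcomb_J_anticommute:
  assumes i: "i \<in> {1..m}"
  shows "Jcomb a (J i x) + J i (Jcomb a x) = (2 * a i) *\<^sub>R x"
proof -
  have "Jcomb a (J i x) + J i (Jcomb a x) = (\<Sum>l=1..m. a l *\<^sub>R (J l (J i x) + J i (J l x)))"
    unfolding Jcomb_def using linear_J[OF i]
    by (simp add: linear_sum linear_scale scaleR_add_right sum.distrib)
  also have "\<dots> = (\<Sum>l=1..m. if l = i then (2 * a i) *\<^sub>R x else 0)"
    using J_anticommute i by (intro sum.cong) auto
  finally show ?thesis using i by simp
qed

lemma Jcomb_Jcomb: "Jcomb a (Jcomb a x) = (\<Sum>i=1..m. (a i)\<^sup>2) *\<^sub>R x"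
proof -
  have "Jcomb a (Jcomb a x) = (\<Sum>i=1..m. a i *\<^sub>R Jcomb a (J i x))"
    unfolding Jcomb_def[of a x] by (simp add: linear_sum[OF linear_Jcomb] linear_scale[OF linear_Jcomb])
  also have "\<dots> = (\<Sum>i=1..m. (2 * (a i)\<^sup>2) *\<^sub>R x - a i *\<^sub>R J i (Jcomb a x))"
    using Jcomb_J_anticommute
    by (intro sum.cong refl) (simp add: eq_diff_eq power2_eq_square flip: scaleR_add_right)
  also have "\<dots> = (2 * (\<Sum>i=1..m. (a i)\<^sup>2)) *\<^sub>R x - Jcomb a (Jcomb a x)"
    by (simp add: sum_subtractf Jcomb_def[of a "Jcomb a x"] sum_distrib_left scaleR_sum_left)
  finally show ?thesis
    by (simp add: eq_diff_eq flip: scaleR_2) (metis scaleR_cancel_left zero_neq_numeral scaleR_scaleR)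
qed

lemma inj_on_J_apply:
  assumes "x \<noteq> 0"
  shows "inj_on (\<lambda>i. J i x) {1..m}"
proof (rule inj_onI, rule ccontr)
  fix i j assume ij: "i \<in> {1..m}" "j \<in> {1..m}" "J i x = J j x" "i \<noteq> j"
  have "J i (J j x) + J j (J i x) = 0" using J_anticommute ij(1,2,4) by auto
  moreover have "J i (J j x) = x" by (metis J_J_self ij(1,3))
  moreover have "J j (J i x) = x" by (metis J_J_self ij(2,3))
  ultimately show False using assms by (simp flip: scaleR_2)
qed

lemma independent_J_apply:
  assumes x: "x \<noteq> 0"
  shows "independent ((\<lambda>i. J i x) ` {1..m})"
proof (rule independent_if_scalars_zero)
  fix f :: "'v \<Rightarrow> real" and v
  assume sum: "(\<Sum>u\<in>(\<lambda>i. J i x) ` {1..m}. f u *\<^sub>R u) = 0" and v: "v \<in> (\<lambda>i. J i x) ` {1..m}"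
  define a where "a i = f (J i x)" for i
  have "Jcomb a x = 0"
    using sum unfolding Jcomb_def a_def sum.reindex[OF inj_on_J_apply[OF x]] by simp
  then have "(\<Sum>i=1..m. (a i)\<^sup>2) *\<^sub>R x = 0"
    using Jcomb_Jcomb[of a x] linear_0[OF linear_Jcomb] by simp
  then have "\<forall>i\<in>{1..m}. (a i)\<^sup>2 = 0"
    using x by (simp add: sum_nonneg_eq_0_iff)
  then show "f v = 0" using v unfolding a_def by auto
qed (simp)

lemma exists_vector_with_J_pairings:
  assumes x: "x \<noteq> 0" and w: "w \<notin> span ((\<lambda>i. J i x) ` {1..m})"
  shows "\<exists>Y. g Y w = 1 \<and> (\<forall>i\<in>{1..m}. g Y (J i x) = c i)"
proof -
  define h where "h v = (if v = w then 1 else c (the_inv_into {1..m} (\<lambda>i. J i x) v))" for v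
  have indep: "independent (insert w ((\<lambda>i. J i x) ` {1..m}))"
    using independent_insertI[OF w independent_J_apply[OF x]] .
  obtain Y where Y: "\<forall>b\<in>insert w ((\<lambda>i. J i x) ` {1..m}). g Y b = h b"
    using exists_vector_with_pairings[OF indep, of h] by blast
  have "g Y (J i x) = c i" if i: "i \<in> {1..m}" for i
  proof -
    have "J i x \<in> span ((\<lambda>i. J i x) ` {1..m})" using i by (intro span_base) auto
    then have "J i x \<noteq> w" using w by auto
    then show ?thesis
      using Y i the_inv_into_f_f[OF inj_on_J_apply[OF x] i] unfolding h_def by simp
  qed
  moreover have "g Y w = 1" using Y unfolding h_def by simp
  ultimately show ?thesis by blast
qed

definition anti_clifford_curvature :: "(nat \<Rightarrow> real) \<Rightarrow> 'v \<Rightarrow> 'v \<Rightarrow> 'v \<Rightarrow> 'v \<Rightarrow> real" where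
  "anti_clifford_curvature \<mu> A B C D = \<mu> 0 * R0 g A B C D + (\<Sum>i=1..m. \<mu> i * RJ g (J i) A B C D)"

lemma jacobi_op_anti_clifford_curvature:
  "jacobi_op g (anti_clifford_curvature \<mu>) P Q =
     \<mu> 0 *\<^sub>R (g P P *\<^sub>R Q - g Q P *\<^sub>R P) + (\<Sum>i=1..m. (3 * \<mu> i * g (J i Q) P) *\<^sub>R J i P)"
proof (rule jacobi_op_eqI)
  fix E
  have "\<mu> i * RJ g (J i) Q P P E = g ((3 * \<mu> i * g (J i Q) P) *\<^sub>R J i P) E" if "i \<in> {1..m}" for i
    using g_J_self[OF that, of P] by (simp add: RJ_def)
  then have RJ_part: "(\<Sum>i=1..m. \<mu> i * RJ g (J i) Q P P E) = g (\<Sum>i=1..m. (3 * \<mu> i * g (J i Q) P) *\<^sub>R J i P) E"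
    unfolding g_sum_left by (rule sum.cong[OF refl])
  have R0_part: "\<mu> 0 * R0 g Q P P E = g (\<mu> 0 *\<^sub>R (g P P *\<^sub>R Q - g Q P *\<^sub>R P)) E"
    by (simp add: R0_def algebra_simps)
  show "anti_clifford_curvature \<mu> Q P P E =
      g (\<mu> 0 *\<^sub>R (g P P *\<^sub>R Q - g Q P *\<^sub>R P) + (\<Sum>i=1..m. (3 * \<mu> i * g (J i Q) P) *\<^sub>R J i P)) E"
    unfolding anti_clifford_curvature_def g_add_left R0_part RJ_part ..
qed

lemma dim_span_J_inter_eigenspace_less:
  assumes x: "x \<noteq> 0" and eig: "Jcomb a x = - t *\<^sub>R x" and k: "k \<in> {1..m}" "a k \<noteq> 0"
  shows "dim (span ((\<lambda>i. J i x) ` {1..m}) \<inter> {z. Jcomb a z = t *\<^sub>R z}) < m"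
proof -
  define U where "U = span ((\<lambda>i. J i x) ` {1..m})"
  define E where "E = {z. Jcomb a z = t *\<^sub>R z}"
  have "Jcomb a (J k x) = (2 * a k) *\<^sub>R x - J k (Jcomb a x)"
    using Jcomb_J_anticommute[OF k(1)] by (simp add: eq_diff_eq)
  also have "\<dots> = t *\<^sub>R J k x + (2 * a k) *\<^sub>R x"
    using eig by (simp add: linear_scale[OF linear_J[OF k(1)]] linear_neg[OF linear_J[OF k(1)]])
  finally have "J k x \<notin> E" using x k(2) unfolding E_def by simp
  moreover have "J k x \<in> U" unfolding U_def using k by (intro span_base) auto
  ultimately have "U \<inter> E \<subset> U" by blast
  moreover have "subspace (U \<inter> E)"
    unfolding U_def E_def by (intro subspace_inter subspace_span subspace_eigenspace linear_Jcomb)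
  ultimately have "dim (U \<inter> E) < dim U"
    using dim_psubset subspace_span[of "(\<lambda>i. J i x) ` {1..m}"] unfolding U_def
    by (metis span_eq_iff)
  also have "dim U \<le> card ((\<lambda>i. J i x) ` {1..m})"
    unfolding U_def dim_span by (rule dim_le_card) (auto intro: span_base)
  also have "\<dots> \<le> m" using card_image_le[of "{1..m}" "\<lambda>i. J i x"] by simp
  finally show ?thesis unfolding U_def E_def .
qed

lemma exists_orthogonal_vector_outside_span:
  assumes dim: "2 * m < DIM('v)" and x: "x \<noteq> 0" and t: "t \<noteq> 0"
    and sq: "(\<Sum>i=1..m. (a i)\<^sup>2) = t\<^sup>2" and eig: "Jcomb a x = - t *\<^sub>R x"
  shows "\<exists>z. g x z = 0 \<and> t *\<^sub>R z + Jcomb a z \<notin> span ((\<lambda>i. J i x) ` {1..m})"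
proof (rule ccontr)
  define U where "U = span ((\<lambda>i. J i x) ` {1..m})"
  define Ep where "Ep = {z. Jcomb a z = t *\<^sub>R z}"
  define Em where "Em = {z. Jcomb a z = (- t) *\<^sub>R z}"
  assume "\<not> ?thesis"
  then have into_U: "t *\<^sub>R z + Jcomb a z \<in> U" if "g x z = 0" for z
    using that unfolding U_def by blast
  have sub: "subspace U" "subspace Ep" "subspace Em"
    unfolding U_def Ep_def Em_def by (rule subspace_span subspace_eigenspace[OF linear_Jcomb])+
  have AA: "Jcomb a (Jcomb a z) = t\<^sup>2 *\<^sub>R z" for z
    using Jcomb_Jcomb sq by simp
  have "{z. g x z = 0} \<subseteq> {p + q |p q. p \<in> U \<inter> Ep \<and> q \<in> Em}"
  proof
    fix z assume "z \<in> {z. g x z = 0}"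
    define p where "p = (1 / (2 * t)) *\<^sub>R (t *\<^sub>R z + Jcomb a z)"
    define q where "q = (1 / (2 * t)) *\<^sub>R (t *\<^sub>R z - Jcomb a z)"
    have "p \<in> U" unfolding p_def using into_U \<open>z \<in> _\<close> sub(1) by (simp add: subspace_scale)
    moreover have "p \<in> Ep" "q \<in> Em"
      unfolding p_def q_def Ep_def Em_def
      by (simp_all add: linear_add[OF linear_Jcomb] linear_diff[OF linear_Jcomb]
          linear_scale[OF linear_Jcomb] AA power2_eq_square algebra_simps)
    moreover have "z = p + q"
    proof -
      have "p + q = (1 / (2 * t)) *\<^sub>R ((t + t) *\<^sub>R z)"
        unfolding p_def q_def by (simp add: scaleR_add_left flip: scaleR_add_right)
      then show ?thesis using t by (simp add: field_simps)
    qed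
    ultimately show "z \<in> {p + q |p q. p \<in> U \<inter> Ep \<and> q \<in> Em}" by blast
  qed
  then have "dim {z. g x z = 0} \<le> dim {p + q |p q. p \<in> U \<inter> Ep \<and> q \<in> Em}"
    by (rule dim_subset)
  also have "\<dots> \<le> dim (U \<inter> Ep) + dim Em"
    using dim_sums_Int[OF subspace_inter[OF sub(1,2)] sub(3)] by linarith
  finally have "dim {z. g x z = 0} \<le> dim (U \<inter> Ep) + dim Em" .
  moreover have "dim {z. g x z = 0} + 1 = DIM('v)"
    using dim_orthogonal_vector[OF x] .
  moreover have "2 * dim Em \<le> DIM('v)"
    using sub(3) skew_adjoint_eigenvectors_orthogonal[OF skew_adjoint_Jcomb, of "- t"] t
    unfolding Em_def by (intro dim_isotropic_subspace) auto
  moreover have "\<exists>k\<in>{1..m}. a k \<noteq> 0"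
  proof (rule ccontr)
    assume "\<not> (\<exists>k\<in>{1..m}. a k \<noteq> 0)"
    then have "(\<Sum>i=1..m. (a i)\<^sup>2) = 0" by simp
    then show False using sq t by simp
  qed
  then have "dim (U \<inter> Ep) < m"
    unfolding U_def Ep_def using dim_span_J_inter_eigenspace_less[OF x eig] by blast
  ultimately show False using dim by linarith
qed

lemma pairing_with_eigenvector_eq_1:
  assumes t: "t \<noteq> 0" and eig: "Jcomb a X = - t *\<^sub>R X"
    and YJ: "\<forall>i\<in>{1..m}. g Y (J i X) = \<mu> 0 * a i / (3 * \<mu> i * t)"
    and balance: "t\<^sup>2 = - \<mu> 0 * (\<Sum>i=1..m. (a i)\<^sup>2 / (3 * \<mu> i))"
  shows "g Y X = 1"
proof -
  have "- t * g Y X = g Y (Jcomb a X)" using eig by simp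
  also have "\<dots> = (\<Sum>i=1..m. a i * (\<mu> 0 * a i / (3 * \<mu> i * t)))"
    using YJ by (simp add: Jcomb_def)
  also have "\<dots> = \<mu> 0 / t * (\<Sum>i=1..m. (a i)\<^sup>2 / (3 * \<mu> i))"
    unfolding sum_distrib_left by (intro sum.cong) (simp_all add: power2_eq_square mult_ac)
  also have "\<dots> = - t"
    using balance t by (simp add: power2_eq_square field_simps)
  finally show ?thesis using t by simp
qed

lemma jacobi_op_eq_0_if_pairings:
  assumes t: "t \<noteq> 0" and \<mu>: "\<forall>i\<in>{1..m}. \<mu> i \<noteq> 0" and eig: "Jcomb a X = - t *\<^sub>R X"
    and null: "g X X = 0" and YX: "g Y X = 1"
    and YJ: "\<forall>i\<in>{1..m}. g Y (J i X) = \<mu> 0 * a i / (3 * \<mu> i * t)"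
  shows "jacobi_op g (anti_clifford_curvature \<mu>) X Y = 0"
proof -
  have "(3 * \<mu> i * g (J i Y) X) *\<^sub>R J i X = (- (\<mu> 0 / t)) *\<^sub>R (a i *\<^sub>R J i X)" if i: "i \<in> {1..m}" for i
    using g_J_left[OF i, of Y X] YJ \<mu> i by simp
  then have "(\<Sum>i=1..m. (3 * \<mu> i * g (J i Y) X) *\<^sub>R J i X) = (- (\<mu> 0 / t)) *\<^sub>R Jcomb a X"
    by (simp add: Jcomb_def scaleR_sum_right)
  also have "\<dots> = \<mu> 0 *\<^sub>R X" using eig t by simp
  finally show ?thesis by (simp add: jacobi_op_anti_clifford_curvature null YX)
qed

lemma g_jacobi_op_if_pairings:
  assumes t: "t \<noteq> 0" and \<mu>: "\<forall>i\<in>{1..m}. \<mu> i \<noteq> 0"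
    and Xz: "g X z = 0" and YX: "g Y X = 1"
    and YJ: "\<forall>i\<in>{1..m}. g Y (J i X) = \<mu> 0 * a i / (3 * \<mu> i * t)"
  shows "g (jacobi_op g (anti_clifford_curvature \<mu>) Y X) z = - (\<mu> 0 / t) * g Y (t *\<^sub>R z + Jcomb a z)"
proof -
  have "3 * \<mu> i * g (J i X) Y * g (J i Y) z = - (\<mu> 0 / t) * (a i * g Y (J i z))" if i: "i \<in> {1..m}" for i
    using g_J_left[OF i, of Y z] g_sym[of "J i X" Y] YJ \<mu> i by simp
  then have "g (\<Sum>i=1..m. (3 * \<mu> i * g (J i X) Y) *\<^sub>R J i Y) z = - (\<mu> 0 / t) * g Y (Jcomb a z)"
    by (simp add: Jcomb_def sum_distrib_left)
  then show ?thesis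
    using Xz YX t by (simp add: jacobi_op_anti_clifford_curvature g_sym[of X Y] field_simps)
qed

end

theorem mainTheorem7:
  fixes g :: "'v::euclidean_space \<Rightarrow> 'v \<Rightarrow> real"
    and m :: nat
    and J :: "nat \<Rightarrow> 'v \<Rightarrow> 'v"
    and \<mu> :: "nat \<Rightarrow> real"
    and \<theta> :: "nat \<Rightarrow> real"
    and X :: 'v
  assumes "scalar_product g"
    and "DIM('v) > 2 * m"
    and "\<forall>i\<in>{1..m}. skew_adjoint g (J i)"
    and "\<forall>i\<in>{1..m}. \<forall>j\<in>{1..m}. \<forall>x. J i (J j x) + J j (J i x) = (if i = j then 2 else 0) *\<^sub>R x"
    and "\<forall>i\<in>{1..m}. \<mu> i \<noteq> 0"
    and "\<exists>i\<in>{0..m}. \<theta> i \<noteq> 0"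
    and "X \<noteq> 0"
    and "\<theta> 0 *\<^sub>R X + (\<Sum>i=1..m. \<theta> i *\<^sub>R J i X) = 0"
    and "\<theta> 0 ^ 2 = (\<Sum>i=1..m. \<theta> i ^ 2)"
    and "(\<Sum>i=1..m. \<theta> i ^ 2) = - \<mu> 0 * (\<Sum>i=1..m. \<theta> i ^ 2 / (3 * \<mu> i))"
  shows "\<not> totally_jacobi_dual g
           (\<lambda>A B C D. \<mu> 0 * R0 g A B C D + (\<Sum>i=1..m. \<mu> i * RJ g (J i) A B C D))"
proof -
  interpret clifford_family g m J
    using assms(1,3,4) by unfold_locales
  have \<theta>0: "\<theta> 0 \<noteq> 0"
  proof
    assume "\<theta> 0 = 0"
    then have "\<theta> i = 0" if "i \<in> {0..m}" for i
      using assms(9) that by (cases i) (auto simp: sum_nonneg_eq_0_iff)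
    then show False using assms(6) by blast
  qed
  have \<mu>0: "\<mu> 0 \<noteq> 0" using assms(9,10) \<theta>0 by auto
  have eig: "Jcomb \<theta> X = - \<theta> 0 *\<^sub>R X"
    using assms(8) unfolding Jcomb_def by (simp add: add_eq_0_iff)
  have null: "g X X = 0"
    using skew_adjoint_eigenvectors_orthogonal[OF skew_adjoint_Jcomb _ eig eig] \<theta>0 by simp
  obtain z where Xz: "g X z = 0"
    and outside: "\<theta> 0 *\<^sub>R z + Jcomb \<theta> z \<notin> span ((\<lambda>i. J i X) ` {1..m})"
    using exists_orthogonal_vector_outside_span assms(2,7,9) \<theta>0 eig by metis
  obtain Y where Yw: "g Y (\<theta> 0 *\<^sub>R z + Jcomb \<theta> z) = 1"
    and YJ: "\<forall>i\<in>{1..m}. g Y (J i X) = \<mu> 0 * \<theta> i / (3 * \<mu> i * \<theta> 0)"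
    using exists_vector_with_J_pairings[OF assms(7) outside,
        of "\<lambda>i. \<mu> 0 * \<theta> i / (3 * \<mu> i * \<theta> 0)"] by blast
  have YX: "g Y X = 1"
    using pairing_with_eigenvector_eq_1[OF \<theta>0 eig YJ] assms(9,10) by simp
  have "jacobi_op g (anti_clifford_curvature \<mu>) X Y = 0 *\<^sub>R Y"
    using jacobi_op_eq_0_if_pairings[OF \<theta>0 assms(5) eig null YX YJ] by simp
  moreover have "jacobi_op g (anti_clifford_curvature \<mu>) Y X \<noteq> c *\<^sub>R X" for c
    using g_jacobi_op_if_pairings[OF \<theta>0 assms(5) Xz YX YJ] Yw Xz \<mu>0 \<theta>0 by auto
  moreover have "Y \<noteq> 0" using YX by auto
  ultimately show ?thesis
    using assms(7) unfolding totally_jacobi_dual_def is_eigenvector_def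
      anti_clifford_curvature_def[abs_def] by blast
qed

end
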